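(* Consider the network described in the context with homogeneous all-to-all coupling $\varepsilon_{ij}=(1-\delta_{ij})\varepsilon$, $\varepsilon>0$, $(N-1)\varepsilon<1$, with an arbitrary rise function $U$ and an arbitrary partial reset function $R$. Then an asynchronous periodic (splay) state exists. More precisely, there is $\sigma^*>0$ with $\big[\bigodot_{s=1}^{N-1}(S_{\sigma^*}\circ H_\varepsilon)\big]\circ S_{\sigma^*}(0)=1$, and the units fire one at a time with all inter-firing intervals equal to $\sigma^*$.
   Context: Model: $N$ units with phases $\phi_i$. A rise function is a smooth $U:[0,\infty)\to[0,\infty)$ with $U'>0$, $U(0)=0$, $U(1)=1$; $U^{-1}$ is its inverse. A partial reset function is a monotonically increasing $R:\mathbb{R}\to\mathbb{R}$ with $R(0)=0$. For $\varepsilon\ge0$, $\sigma\in\mathbb{R}$: $H_\varepsilon(\phi)=U^{-1}(U(\phi)+\varepsilon)$, $J_\varepsilon(\phi)=U^{-1}(R(U(\phi)+\varepsilon-1))$, $S_\sigma(\phi)=\phi+\sigma$. Composition notation: $\bigodot_{s=p}^{q}(S_{\sigma_s}\circ H_{\varepsilon_s}):=S_{\sigma_q}\circ H_{\varepsilon_q}\circ\cdots\circ S_{\sigma_p}\circ H_{\varepsilon_p}$. Dynamics: $\varepsilon_{ij}\ge0$ is the strength of the pulse from unit $j$ to unit $i$. Between events every phase increases at unit rate. When at time $t$ the set $\Theta^{(0)}=\{j:\phi_j(t^-)=1\}$ is nonempty, an avalanche occurs: with $u_i^{(0)}=U(\phi_i(t^-))$, set $u_i^{(k+1)}=u_i^{(k)}+\sum_{j\in\Theta^{(k)}}\varepsilon_{ij}$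 and $\Theta^{(k+1)}=\{i:u_i^{(k)}<1\le u_i^{(k+1)}\}$ until empty; $\Theta=\bigcup_k\Theta^{(k)}$. Then $\phi_i(t^+)=H_{\sum_{j\in\Theta}\varepsilon_{ij}}(\phi_i(t^-))$ for $i\notin\Theta$ and $\phi_i(t^+)=J_{\sum_{j\in\Theta}\varepsilon_{ij}}(\phi_i(t^-))$ for $i\in\Theta$. The return map sends the state just before a fixed reference unit fires to the state just before it fires next. An asynchronous periodic state is a state invariant under the return map in which every avalanche has size $1$. *)

theory Defs
  imports "HOL-Analysis.Analysis"
begin

definition rise_function :: "(real \<Rightarrow> real) \<Rightarrow> bool" where
  "rise_function U \<longleftrightarrow>
     (\<exists>D :: nat \<Rightarrow> real \<Rightarrow> real. D 0 = U \<and>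
        (\<forall>k. \<forall>x\<ge>0. (D k has_real_derivative D (Suc k) x) (at x within {0..})) \<and>
        (\<forall>x\<ge>0. D 1 x > 0)) \<and>
     U 0 = 0 \<and> U 1 = 1 \<and> (\<forall>x\<ge>0. U x \<ge> 0)"

definition partial_reset :: "(real \<Rightarrow> real) \<Rightarrow> bool" where
  "partial_reset R \<longleftrightarrow> mono R \<and> R 0 = 0"

definition Uinv :: "(real \<Rightarrow> real) \<Rightarrow> real \<Rightarrow> real" where
  "Uinv U y = the_inv_into {0..} U y"

definition Hf :: "(real \<Rightarrow> real) \<Rightarrow> real \<Rightarrow> real \<Rightarrow> real" where
  "Hf U e \<phi> = Uinv U (U \<phi> + e)"

definition Jf :: "(real \<Rightarrow> real) \<Rightarrow> (real \<Rightarrow> real) \<Rightarrow> real \<Rightarrow> real \<Rightarrow> real" where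
  "Jf U R e \<phi> = Uinv U (R (U \<phi> + e - 1))"

definition Sf :: "real \<Rightarrow> real \<Rightarrow> real" where
  "Sf \<sigma> \<phi> = \<phi> + \<sigma>"

text \<open>Avalanche iteration: returns (u^(k), Theta^(k)); units are 0..<N.\<close>
fun aval_seq :: "nat \<Rightarrow> (nat \<Rightarrow> nat \<Rightarrow> real) \<Rightarrow> (real \<Rightarrow> real) \<Rightarrow> (nat \<Rightarrow> real)
                  \<Rightarrow> nat \<Rightarrow> (nat \<Rightarrow> real) \<times> nat set" where
  "aval_seq N eps U \<phi> 0 = (\<lambda>i. U (\<phi> i), {j. j < N \<and> \<phi> j = 1})"
| "aval_seq N eps U \<phi> (Suc k) =
     (let (u, Th) = aval_seq N eps U \<phi> k;
          u' = (\<lambda>i. u i + (\<Sum>j\<in>Th. eps i j))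
      in (u', {i. i < N \<and> u i < 1 \<and> 1 \<le> u' i}))"

definition avalanche :: "nat \<Rightarrow> (nat \<Rightarrow> nat \<Rightarrow> real) \<Rightarrow> (real \<Rightarrow> real) \<Rightarrow> (nat \<Rightarrow> real) \<Rightarrow> nat set" where
  "avalanche N eps U \<phi> = (\<Union>k. snd (aval_seq N eps U \<phi> k))"

definition post_event :: "nat \<Rightarrow> (nat \<Rightarrow> nat \<Rightarrow> real) \<Rightarrow> (real \<Rightarrow> real) \<Rightarrow> (real \<Rightarrow> real)
                           \<Rightarrow> (nat \<Rightarrow> real) \<Rightarrow> (nat \<Rightarrow> real)" where
  "post_event N eps U R \<phi> = (let Th = avalanche N eps U \<phi> in
     (\<lambda>i. if i \<in> Th then Jf U R (\<Sum>j\<in>Th. eps i j) (\<phi> i)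
          else Hf U (\<Sum>j\<in>Th. eps i j) (\<phi> i)))"

text \<open>Time from a state until the next firing (phases grow at unit rate).\<close>
definition time_to_event :: "nat \<Rightarrow> (nat \<Rightarrow> real) \<Rightarrow> real" where
  "time_to_event N \<phi> = 1 - Max (\<phi> ` {..<N})"

definition drift :: "real \<Rightarrow> (nat \<Rightarrow> real) \<Rightarrow> (nat \<Rightarrow> real)" where
  "drift t \<phi> = (\<lambda>i. \<phi> i + t)"

text \<open>Map from the state just before one event to the state just before the next event.\<close>
definition event_map :: "nat \<Rightarrow> (nat \<Rightarrow> nat \<Rightarrow> real) \<Rightarrow> (real \<Rightarrow> real) \<Rightarrow> (real \<Rightarrow> real)
                          \<Rightarrow> (nat \<Rightarrow> real) \<Rightarrow> (nat \<Rightarrow> real)" where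
  "event_map N eps U R \<phi> = (let \<psi> = post_event N eps U R \<phi> in drift (time_to_event N \<psi>) \<psi>)"

definition hom_coupling :: "real \<Rightarrow> nat \<Rightarrow> nat \<Rightarrow> real" where
  "hom_coupling e i j = (if i = j then 0 else e)"

end

theory Submission
  imports Defs
begin

(* Let p(0) = sigma and p(k+1) = H_e(p(k)) + sigma be the phase of a unit that has
   received k pulses since it last fired, sigma being the common inter-firing interval.
   The splay period sigma* is fixed by p(N-1) = 1.  To make p depend continuously on
   sigma for every sigma, H_e is replaced by a clamped version that saturates at 1;
   the clamped orbit at sigma = 0 stays below 1 because (N-1)e < 1, and at sigma = 1
   it is at least 1, so the intermediate value theorem yields sigma* in (0,1].  For this
   sigma* the first N-1 orbit points lie strictly below threshold and no clamping
   occurs, so they are genuine orbit points of S_sigma o H_e.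

   The splay state before event m puts unit i at orbit index (N-1+m-i) mod N.  A
   single event then fires exactly unit m mod N, which is reset to 0, while every
   other unit advances by one orbit index (minus sigma); after drifting by sigma the
   state is the splay state before event m+1.  Induction over m gives the theorem. *)


section \<open>Rise functions and their inverse\<close>

context
  fixes U :: "real \<Rightarrow> real"
  assumes rise: "rise_function U"
begin

lemma rise_derivative:
  obtains U' where "\<And>x. x \<ge> 0 \<Longrightarrow> (U has_real_derivative U' x) (at x within {0..})"
    and "\<And>x. x \<ge> 0 \<Longrightarrow> U' x > 0"
proof -
  from rise obtain D where "D 0 = U"
    and "\<forall>k. \<forall>x\<ge>0. (D k has_real_derivative D (Suc k) x) (at x within {0..})"
    and "\<forall>x\<ge>0. D 1 x > 0"
    unfolding rise_function_def by blast
  then show ?thesis using that[of "D 1"] by (metis One_nat_def)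
qed

lemma rise_continuous: "continuous_on {0..} U"
proof -
  obtain U' where "\<And>x. x \<ge> 0 \<Longrightarrow> (U has_real_derivative U' x) (at x within {0..})"
    using rise_derivative by blast
  then show ?thesis by (intro DERIV_continuous_on) auto
qed

lemma rise_strict_mono:
  assumes "0 \<le> a" and "a < b"
  shows "U a < U b"
proof (rule DERIV_pos_imp_increasing_open[OF assms(2)])
  obtain U' where U': "\<And>x. x \<ge> 0 \<Longrightarrow> (U has_real_derivative U' x) (at x within {0..})"
    and pos: "\<And>x. x \<ge> 0 \<Longrightarrow> U' x > 0"
    using rise_derivative by blast
  fix x assume x: "a < x" "x < b"
  then have "at x within {0..} = at x"
    using assms by (intro at_within_interior) auto
  then show "\<exists>y. DERIV U x :> y \<and> y > 0"
    using U'[of x] pos[of x] x assms by auto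
next
  show "continuous_on {a..b} U"
    using continuous_on_subset[OF rise_continuous] assms by auto
qed

lemma rise_le_iff: "0 \<le> a \<Longrightarrow> 0 \<le> b \<Longrightarrow> U a \<le> U b \<longleftrightarrow> a \<le> b"
  by (metis rise_strict_mono linorder_not_le order_le_less)

lemma rise_inj: "inj_on U {0..}"
  by (rule inj_onI) (metis rise_le_iff atLeast_iff order_antisym order_refl)

lemma rise_0: "U 0 = 0" and rise_1: "U 1 = 1"
  using rise unfolding rise_function_def by auto

lemma rise_image: "U ` {0..1} = {0..1}"
proof
  show "U ` {0..1} \<subseteq> {0..1}"
    using rise_le_iff[of 0] rise_le_iff[of _ 1] rise_0 rise_1 by fastforce
  show "{0..1} \<subseteq> U ` {0..1}"
  proof
    fix y :: real assume "y \<in> {0..1}"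
    then obtain x where "0 \<le> x" "x \<le> 1" "U x = y"
      using IVT'[of U 0 y 1] rise_0 rise_1 continuous_on_subset[OF rise_continuous] by fastforce
    then show "y \<in> U ` {0..1}" by auto
  qed
qed

lemma Uinv_U: "0 \<le> x \<Longrightarrow> Uinv U (U x) = x"
  unfolding Uinv_def using the_inv_into_f_f[OF rise_inj] by auto

lemma U_Uinv:
  assumes "0 \<le> y" and "y \<le> 1"
  shows "U (Uinv U y) = y" and "0 \<le> Uinv U y" and "Uinv U y \<le> 1"
proof -
  obtain x where "x \<in> {0..1}" "U x = y"
    using rise_image assms by (metis atLeastAtMost_iff imageE)
  moreover from this have "Uinv U y = x" using Uinv_U by auto
  ultimately show "U (Uinv U y) = y" "0 \<le> Uinv U y" "Uinv U y \<le> 1" by auto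
qed

lemma Uinv_0: "Uinv U 0 = 0" and Uinv_1: "Uinv U 1 = 1"
  using Uinv_U[of 0] Uinv_U[of 1] rise_0 rise_1 by simp_all

lemma Uinv_continuous: "continuous_on {0..1} (Uinv U)"
proof -
  have "continuous_on (U ` {0..1}) (Uinv U)"
    by (rule continuous_on_inv) (use continuous_on_subset[OF rise_continuous] Uinv_U in auto)
  then show ?thesis using rise_image by simp
qed

end


section \<open>The clamped pulse map and its orbit\<close>

text \<open>H_e with input clamped to [0,1] and output saturating at threshold: it agrees with
  H_e below threshold and, unlike H_e, is continuous on all of the reals.\<close>
definition Hclamp :: "(real \<Rightarrow> real) \<Rightarrow> real \<Rightarrow> real \<Rightarrow> real" where
  "Hclamp U e x = Uinv U (min 1 (U (max 0 (min 1 x)) + e))"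

text \<open>Phase of a unit k pulses after its reset, in a network firing every sigma time units.\<close>
definition orbit :: "(real \<Rightarrow> real) \<Rightarrow> real \<Rightarrow> real \<Rightarrow> nat \<Rightarrow> real" where
  "orbit U e \<sigma> k = ((\<lambda>x. Hclamp U e x + \<sigma>) ^^ k) \<sigma>"

lemma orbit_0 [simp]: "orbit U e \<sigma> 0 = \<sigma>"
  by (simp add: orbit_def)

lemma orbit_Suc [simp]: "orbit U e \<sigma> (Suc k) = Hclamp U e (orbit U e \<sigma> k) + \<sigma>"
  by (simp add: orbit_def)

context
  fixes U :: "real \<Rightarrow> real" and e :: real
  assumes rise: "rise_function U" and e_pos: "e > 0"
begin

lemma U_clamped_range: "0 \<le> U (max 0 (min 1 x))" "U (max 0 (min 1 x)) \<le> 1"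
  using rise_le_iff[OF rise, of 0 "max 0 (min 1 x)"] rise_le_iff[OF rise, of "max 0 (min 1 x)" 1]
    rise_0[OF rise] rise_1[OF rise] by auto

lemma Hclamp_range: "0 \<le> Hclamp U e x" "Hclamp U e x \<le> 1"
  unfolding Hclamp_def using U_Uinv[OF rise] U_clamped_range[of x] e_pos by auto

lemma Hclamp_above_threshold: "x \<ge> 1 \<Longrightarrow> Hclamp U e x = 1"
  unfolding Hclamp_def using rise_1[OF rise] Uinv_1[OF rise] e_pos by simp

lemma Hclamp_eq_Hf:
  assumes "0 \<le> x" "x \<le> 1" "U x + e < 1"
  shows "Hclamp U e x = Hf U e x"
  using assms by (simp add: Hclamp_def Hf_def)

lemma Hclamp_continuous: "continuous_on UNIV (Hclamp U e)"
proof -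
  have "continuous_on UNIV (\<lambda>x. U (max 0 (min 1 x)))"
    by (rule continuous_on_compose2[OF continuous_on_subset[OF rise_continuous[OF rise]],
          of "{0..1}"]) (auto intro!: continuous_intros)
  then have "continuous_on UNIV (\<lambda>x. min 1 (U (max 0 (min 1 x)) + e))"
    by (intro continuous_intros)
  then show ?thesis unfolding Hclamp_def[abs_def]
    by (rule continuous_on_compose2[OF Uinv_continuous[OF rise]]) (use U_clamped_range e_pos in auto)
qed

lemma orbit_continuous: "continuous_on S (\<lambda>\<sigma>. orbit U e \<sigma> n)"
proof (induction n)
  case (Suc n)
  then have "continuous_on S (\<lambda>\<sigma>. Hclamp U e (orbit U e \<sigma> n))"
    by (intro continuous_on_compose2[OF Hclamp_continuous]) auto
  then show ?case by (simp add: continuous_intros)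
qed (simp add: continuous_on_id)

lemma orbit_no_drift:
  "real k * e \<le> 1 \<Longrightarrow> 0 \<le> orbit U e 0 k \<and> U (orbit U e 0 k) = real k * e"
proof (induction k)
  case 0
  then show ?case using rise_0[OF rise] by simp
next
  case (Suc k)
  then have "real k * e \<le> 1" using e_pos by (simp add: algebra_simps)
  with Suc.IH have "0 \<le> orbit U e 0 k" "U (orbit U e 0 k) = real k * e" by auto
  moreover from this have "orbit U e 0 k \<le> 1"
    using rise_le_iff[OF rise, of "orbit U e 0 k" 1] rise_1[OF rise] \<open>real k * e \<le> 1\<close> by auto
  ultimately have "min 1 (U (max 0 (min 1 (orbit U e 0 k))) + e) = real (Suc k) * e"
    using Suc.prems by (simp add: algebra_simps)
  then show ?case
    using U_Uinv[OF rise, of "real (Suc k) * e"] Suc.prems e_pos by (simp add: Hclamp_def)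
qed

lemma orbit_pos: "\<sigma> > 0 \<Longrightarrow> orbit U e \<sigma> k > 0"
  by (cases k) (use Hclamp_range in \<open>auto simp: add_nonneg_pos\<close>)

lemma orbit_stays_above:
  assumes "orbit U e \<sigma> k \<ge> 1" and "\<sigma> > 0"
  shows "orbit U e \<sigma> (Suc k + j) > 1"
  by (induction j) (use assms Hclamp_above_threshold in simp_all)

lemma splay_period_exists:
  assumes "real (N - 1) * e < 1"
  shows "\<exists>\<sigma>>0. orbit U e \<sigma> (N - 1) = 1"
proof -
  have "0 \<le> orbit U e 0 (N - 1)" and U_orbit: "U (orbit U e 0 (N - 1)) = real (N - 1) * e"
    using orbit_no_drift[of "N - 1"] assms by auto
  then have below: "orbit U e 0 (N - 1) < 1"
    using rise_le_iff[OF rise, of 1] rise_1[OF rise] assms by fastforce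
  have "1 \<le> orbit U e 1 (N - 1)"
    by (cases "N - 1") (use Hclamp_range in auto)
  with below obtain \<sigma> where "0 \<le> \<sigma>" "orbit U e \<sigma> (N - 1) = 1"
    using IVT'[of "\<lambda>\<sigma>. orbit U e \<sigma> (N - 1)" 0 1 1] orbit_continuous by fastforce
  moreover have "\<sigma> \<noteq> 0" using below calculation by auto
  ultimately show ?thesis by (intro exI[of _ \<sigma>]) auto
qed

end


section \<open>The orbit at the splay period\<close>

context
  fixes U :: "real \<Rightarrow> real" and e \<sigma> :: real and N :: nat
  assumes rise: "rise_function U" and e_pos: "e > 0" and \<sigma>_pos: "\<sigma> > 0"
    and period: "orbit U e \<sigma> (N - 1) = 1"
begin

lemma orbit_below_threshold: "k < N - 1 \<Longrightarrow> orbit U e \<sigma> k < 1"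
proof (rule ccontr)
  assume k: "k < N - 1" and "\<not> orbit U e \<sigma> k < 1"
  then have "orbit U e \<sigma> k \<ge> 1" by simp
  then have "orbit U e \<sigma> (Suc k + (N - 2 - k)) > 1"
    by (rule orbit_stays_above[OF rise e_pos _ \<sigma>_pos])
  moreover have "Suc k + (N - 2 - k) = N - 1" using k by simp
  ultimately show False using period by (metis less_irrefl)
qed

lemma orbit_le_threshold: "k \<le> N - 1 \<Longrightarrow> orbit U e \<sigma> k \<le> 1"
  using orbit_below_threshold[of k] period
  by (cases "k = N - 1") (simp_all add: less_imp_le)

lemma orbit_step:
  assumes "k < N - 1"
  shows "U (orbit U e \<sigma> k) + e < 1" and "orbit U e \<sigma> (Suc k) = Hf U e (orbit U e \<sigma> k) + \<sigma>"
proof -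
  let ?x = "orbit U e \<sigma> k"
  have x: "0 < ?x" "?x < 1"
    using orbit_pos[OF rise e_pos \<sigma>_pos] orbit_below_threshold[OF assms] by auto
  have "Hclamp U e ?x < 1"
    using orbit_le_threshold[of "Suc k"] assms \<sigma>_pos by simp
  then show lt: "U ?x + e < 1"
    using x Uinv_1[OF rise] by (auto simp: Hclamp_def)
  show "orbit U e \<sigma> (Suc k) = Hf U e ?x + \<sigma>"
    using Hclamp_eq_Hf[OF rise e_pos _ _ lt] x by simp
qed

lemma orbit_iterate: "k \<le> N - 1 \<Longrightarrow> ((Sf \<sigma> \<circ> Hf U e) ^^ k) (Sf \<sigma> 0) = orbit U e \<sigma> k"
proof (induction k)
  case 0
  then show ?case by (simp add: Sf_def)
next
  case (Suc k)
  then show ?case using orbit_step(2)[of k] by (simp add: Sf_def)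
qed

end


section \<open>Orbit indices in the splay state\<close>

text \<open>Before event m (where unit m mod N fires) unit i sits at this orbit index.\<close>
definition splay_index :: "nat \<Rightarrow> nat \<Rightarrow> nat \<Rightarrow> nat" where
  "splay_index N m i = (N - 1 + m - i) mod N"

definition splay_state :: "(nat \<Rightarrow> real) \<Rightarrow> nat \<Rightarrow> nat \<Rightarrow> nat \<Rightarrow> real" where
  "splay_state p N m i = p (splay_index N m i)"

lemma splay_index_le: "N \<ge> 1 \<Longrightarrow> splay_index N m i \<le> N - 1"
  unfolding splay_index_def using mod_less_divisor[of N "N - 1 + m - i"] by linarith

lemma splay_index_top:
  assumes "i < N"
  shows "splay_index N m i = N - 1 \<longleftrightarrow> i = m mod N"
proof -
  have "N + m - i = Suc (N - 1 + m - i)" using assms by simp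
  then have "splay_index N m i = N - 1 \<longleftrightarrow> (N + m - i) mod N = 0"
    using assms by (auto simp: splay_index_def mod_Suc)
  also have "\<dots> \<longleftrightarrow> int N dvd (int N + int m - int i)"
    using assms by (metis dvd_eq_mod_eq_0 int_dvd_int_iff le_add1 less_imp_le_nat of_nat_add
        of_nat_diff order_trans)
  also have "\<dots> \<longleftrightarrow> int N dvd (int m - int i)"
    by (metis add_diff_eq dvd_add_right_iff dvd_refl)
  also have "\<dots> \<longleftrightarrow> i = m mod N"
    using assms by (metis mod_eq_dvd_iff mod_less of_nat_eq_iff zmod_int)
  finally show ?thesis .
qed

lemma splay_index_Suc:
  assumes "i < N"
  shows "splay_index N (Suc m) i = (if i = m mod N then 0 else Suc (splay_index N m i))"
proof -
  have "N - 1 + Suc m - i = Suc (N - 1 + m - i)" using assms by simp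
  then show ?thesis
    using splay_index_top[OF assms, of m] assms by (auto simp: splay_index_def mod_Suc)
qed

lemma splay_index_period:
  assumes "i < N"
  shows "splay_index N N i = splay_index N 0 i"
proof -
  have "N - 1 + N - i = (N - 1 - i) + N" using assms by simp
  then show ?thesis by (simp add: splay_index_def)
qed


section \<open>Avalanches triggered by a single unit\<close>

lemma avalanche_single:
  assumes U1: "U 1 = 1" and k: "k < N" "\<phi> k = 1"
    and others: "\<And>i. i < N \<Longrightarrow> i \<noteq> k \<Longrightarrow> \<phi> i \<noteq> 1 \<and> U (\<phi> i) + eps i k < 1"
  shows "avalanche N eps U \<phi> = {k}"
proof -
  have at_threshold: "{j. j < N \<and> \<phi> j = 1} = {k}"
    using k others by auto
  then have first: "aval_seq N eps U \<phi> 0 = (\<lambda>i. U (\<phi> i), {k})"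
    by simp
  have "snd (aval_seq N eps U \<phi> (Suc 0)) = {i. i < N \<and> U (\<phi> i) < 1 \<and> 1 \<le> U (\<phi> i) + eps i k}"
    by (simp add: at_threshold)
  also have "\<dots> = {}"
    using others k U1 by fastforce
  finally have no_second_round: "snd (aval_seq N eps U \<phi> (Suc 0)) = {}" .
  have "snd (aval_seq N eps U \<phi> (Suc n)) = {}" for n
  proof (induction n)
    case 0
    show ?case by (rule no_second_round)
  next
    case (Suc n)
    then obtain u where "aval_seq N eps U \<phi> (Suc n) = (u, {})"
      by (metis prod.collapse)
    then show ?case by simp
  qed
  then have "snd (aval_seq N eps U \<phi> n) = (if n = 0 then {k} else {})" for n
    using first by (cases n) auto
  then show ?thesis
    unfolding avalanche_def by (auto split: if_splits)
qed


section \<open>One event of the splay state\<close>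

context
  fixes U R :: "real \<Rightarrow> real" and e \<sigma> :: real and N :: nat
  assumes rise: "rise_function U" and reset: "partial_reset R" and e_pos: "e > 0"
    and \<sigma>_pos: "\<sigma> > 0" and period: "orbit U e \<sigma> (N - 1) = 1" and N_pos: "N \<ge> 1"
begin

abbreviation (input) splay :: "nat \<Rightarrow> nat \<Rightarrow> real" where
  "splay \<equiv> splay_state (orbit U e \<sigma>) N"

lemma splay_index_nonfiring:
  "i < N \<Longrightarrow> i \<noteq> m mod N \<Longrightarrow> splay_index N m i < N - 1"
  using splay_index_le[OF N_pos, of m i] splay_index_top[of i N m] by linarith

lemma splay_avalanche:
  assumes "\<forall>i<N. \<phi> i = splay m i"
  shows "avalanche N (hom_coupling e) U \<phi> = {m mod N}"
proof (rule avalanche_single[where U = U, OF rise_1[OF rise]])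
  show "m mod N < N" "\<phi> (m mod N) = 1"
    using assms N_pos splay_index_top[of "m mod N" N m] period by (auto simp: splay_state_def)
  fix i assume i: "i < N" "i \<noteq> m mod N"
  then have "splay_index N m i < N - 1" by (rule splay_index_nonfiring)
  then show "\<phi> i \<noteq> 1 \<and> U (\<phi> i) + hom_coupling e i (m mod N) < 1"
    using assms i orbit_below_threshold[OF rise e_pos \<sigma>_pos period]
      orbit_step(1)[OF rise e_pos \<sigma>_pos period]
    by (fastforce simp: splay_state_def hom_coupling_def)
qed

lemma splay_post_event:
  assumes "\<forall>i<N. \<phi> i = splay m i" and "i < N"
  shows "post_event N (hom_coupling e) U R \<phi> i = splay (Suc m) i - \<sigma>"
proof (cases "i = m mod N")
  case True
  then have "\<phi> i = 1"
    using assms splay_index_top[of i N m] period by (simp add: splay_state_def)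
  moreover have "R 0 = 0" using reset by (simp add: partial_reset_def)
  ultimately show ?thesis
    using True assms splay_avalanche[OF assms(1)] splay_index_Suc[OF assms(2), of m]
      rise_1[OF rise] Uinv_0[OF rise]
    by (simp add: post_event_def hom_coupling_def splay_state_def Jf_def Let_def)
next
  case False
  then show ?thesis
    using assms splay_avalanche[OF assms(1)] splay_index_Suc[OF assms(2), of m]
      orbit_step(2)[OF rise e_pos \<sigma>_pos period splay_index_nonfiring[OF assms(2) False]]
    by (simp add: post_event_def hom_coupling_def splay_state_def Let_def)
qed

lemma splay_time_to_event:
  assumes "\<forall>i<N. \<phi> i = splay m i"
  shows "time_to_event N (post_event N (hom_coupling e) U R \<phi>) = \<sigma>"
proof -
  let ?next = "Suc m mod N"
  have "Max (post_event N (hom_coupling e) U R \<phi> ` {..<N}) = 1 - \<sigma>"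
  proof (rule Max_eqI)
    fix y assume "y \<in> post_event N (hom_coupling e) U R \<phi> ` {..<N}"
    then show "y \<le> 1 - \<sigma>"
      using splay_post_event[OF assms] splay_index_le[OF N_pos]
        orbit_le_threshold[OF rise e_pos \<sigma>_pos period] by (auto simp: splay_state_def)
  next
    have "?next < N" "splay (Suc m) ?next = 1"
      using N_pos splay_index_top[of ?next N "Suc m"] period by (auto simp: splay_state_def)
    then show "1 - \<sigma> \<in> post_event N (hom_coupling e) U R \<phi> ` {..<N}"
      using splay_post_event[OF assms] by (metis image_eqI lessThan_iff)
  qed simp
  then show ?thesis by (simp add: time_to_event_def)
qed

lemma splay_event_map:
  assumes "\<forall>i<N. \<phi> i = splay m i"
  shows "\<forall>i<N. event_map N (hom_coupling e) U R \<phi> i = splay (Suc m) i"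
  using splay_time_to_event[OF assms] splay_post_event[OF assms]
  by (simp add: event_map_def drift_def Let_def)

lemma splay_trajectory:
  "\<forall>i<N. (event_map N (hom_coupling e) U R ^^ m) (splay 0) i = splay m i"
  by (induction m) (simp_all add: splay_event_map)

end


theorem mainTheorem2:
  fixes N :: nat and e :: real and U R :: "real \<Rightarrow> real"
  assumes "N \<ge> 1" and "e > 0" and "real (N - 1) * e < 1"
    and "rise_function U" and "partial_reset R"
  shows "\<exists>\<sigma>>0. ((Sf \<sigma> \<circ> Hf U e) ^^ (N - 1)) (Sf \<sigma> 0) = 1 \<and>
     (\<exists>\<phi>0 :: nat \<Rightarrow> real.
        \<phi>0 0 = 1 \<and> (\<forall>i<N. 0 \<le> \<phi>0 i \<and> \<phi>0 i \<le> 1) \<and>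
        (let traj = (\<lambda>m. (event_map N (hom_coupling e) U R ^^ m) \<phi>0) in
           (\<forall>m. \<exists>k<N. avalanche N (hom_coupling e) U (traj m) = {k}) \<and>
           (\<forall>m. time_to_event N (post_event N (hom_coupling e) U R (traj m)) = \<sigma>) \<and>
           (\<forall>m m'. m < N \<and> m' < N \<and> m \<noteq> m' \<longrightarrow>
               avalanche N (hom_coupling e) U (traj m) \<noteq> avalanche N (hom_coupling e) U (traj m')) \<and>
           (\<forall>i<N. traj N i = \<phi>0 i)))"
proof -
  note N_pos = assms(1) and e_pos = assms(2) and rise = assms(4) and reset = assms(5)
  obtain \<sigma> where \<sigma>_pos: "\<sigma> > 0" and period: "orbit U e \<sigma> (N - 1) = 1"
    using splay_period_exists[OF rise e_pos assms(3)] by blast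
  note splay_facts = rise reset e_pos \<sigma>_pos period N_pos
  let ?\<phi>0 = "splay_state (orbit U e \<sigma>) N 0"
  let ?traj = "\<lambda>m. (event_map N (hom_coupling e) U R ^^ m) ?\<phi>0"
  have traj: "\<forall>i<N. ?traj m i = splay_state (orbit U e \<sigma>) N m i" for m
    by (rule splay_trajectory[OF splay_facts])
  have firing: "avalanche N (hom_coupling e) U (?traj m) = {m mod N}" for m
    by (rule splay_avalanche[OF splay_facts traj])
  have timing: "time_to_event N (post_event N (hom_coupling e) U R (?traj m)) = \<sigma>" for m
    by (rule splay_time_to_event[OF splay_facts traj])
  have periodic: "\<forall>i<N. ?traj N i = ?\<phi>0 i"
    using traj[of N] splay_index_period by (simp add: splay_state_def)
  have start: "?\<phi>0 0 = 1" "\<forall>i<N. 0 \<le> ?\<phi>0 i \<and> ?\<phi>0 i \<le> 1"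
    using period N_pos orbit_pos[OF rise e_pos \<sigma>_pos] splay_index_le[OF N_pos]
      orbit_le_threshold[OF rise e_pos \<sigma>_pos period]
    by (auto simp: splay_state_def splay_index_def less_imp_le)
  have "((Sf \<sigma> \<circ> Hf U e) ^^ (N - 1)) (Sf \<sigma> 0) = 1"
    using orbit_iterate[OF rise e_pos \<sigma>_pos period] period by simp
  then show ?thesis
    unfolding Let_def using \<sigma>_pos start firing timing periodic N_pos
    by (intro exI[of _ \<sigma>] conjI exI[of _ ?\<phi>0]) auto
qed

end
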